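(* Let $k,n\ge 1$ and $q\ge 2$ be integers and let $\varepsilon>0$. Let $H$ be a $qk$-uniform hypergraph on $qn$ vertices, and let $\mathcal{Q}$ be a partition of $V(H)$ into $n$ sets of size $q$, chosen uniformly at random. Then with probability at least $1-2\exp(-\varepsilon^2 n/(16q))$ we have \[ |H_{\mathcal{Q}}|\ \ge\ \frac{\binom{n}{k}}{\binom{qn}{qk}}\,|H|-\varepsilon n^k. \]
   Context: $|H|$ denotes the number of edges of $H$. Given a partition $\mathcal{Q}=\{B_1,\dots,B_n\}$ of $V(H)$ into sets of size $q$, the squashed hypergraph $H_{\mathcal{Q}}$ is the $k$-uniform hypergraph on vertex set $\{1,\dots,n\}$ in which a $k$-set $I$ is an edge iff $\bigcup_{i\in I}B_i$ is an edge of $H$. *)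

theory Defs
  imports Complex_Main "HOL-Library.Disjoint_Sets"
begin

definition eq_partitions :: "'a set \<Rightarrow> nat \<Rightarrow> 'a set set set" where
  "eq_partitions V q = {P. (\<forall>B\<in>P. B \<subseteq> V \<and> card B = q) \<and> \<Union>P = V \<and> disjoint P}"

definition squash :: "'a set set \<Rightarrow> 'a set set \<Rightarrow> nat \<Rightarrow> 'a set set set" where
  "squash H P k = {I. I \<subseteq> P \<and> card I = k \<and> \<Union>I \<in> H}"

end

theory Submission
  imports Defs "HOL-Probability.Hoeffding" "HOL-Combinatorics.Multiset_Permutations"
begin

(*
  A uniformly random partition of V into blocks of size q is obtained by cutting a uniformly
  random ordering of V into n consecutive segments of length q: every such partition arises
  from the same number of orderings.  By symmetry every (qk)-subset of V is a union of k blocks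
  for equally many orderings, so the expected number of edges of H_Q is
  binom(n, k) / binom(qn, qk) |H|.  Transposing two entries of an ordering moves at most two
  blocks, each of which lies in at most n^(k-1) sets of k blocks, so |H_Q| changes by at most
  2 n^(k-1).  Revealing the ordering one entry at a time, the conditional expectations of |H_Q|
  form a martingale whose increments are bounded by 2 n^(k-1), because two extensions of the same
  prefix are coupled by a transposition.  The Azuma-Hoeffding inequality over the qn steps bounds
  the probability of a deviation eps n^k below the mean by exp (- eps^2 n / (2q)).
*)

section \<open>Hoeffding's lemma and the Azuma--Hoeffding inequality for prefix classes\<close>

lemma Hoeffdings_lemma_sum_exp:
  fixes Y :: "'b \<Rightarrow> real"
  assumes "finite A" and "(\<Sum>x\<in>A. Y x) = 0"
    and bounds: "\<And>x. x \<in> A \<Longrightarrow> a \<le> Y x \<and> Y x \<le> b" and "l \<ge> 0"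
  shows "(\<Sum>x\<in>A. exp (l * Y x)) \<le> card A * exp (l\<^sup>2 * (b - a)\<^sup>2 / 8)"
proof (cases "A = {} \<or> l = 0")
  case True
  then show ?thesis
    by auto
next
  case False
  then have "A \<noteq> {}" "l > 0"
    using \<open>l \<ge> 0\<close> by auto
  let ?M = "measure_pmf (pmf_of_set A)"
  interpret interval_bounded_random_variable ?M Y a b
    by unfold_locales (use \<open>finite A\<close> \<open>A \<noteq> {}\<close> bounds in \<open>auto simp: AE_measure_pmf_iff\<close>)
  have "measure_pmf.expectation (pmf_of_set A) Y = 0"
    using assms \<open>A \<noteq> {}\<close> by (simp add: integral_pmf_of_set)
  then have "(\<integral>\<^sup>+x. exp (l * Y x) \<partial>?M) \<le> exp (l\<^sup>2 * (b - a)\<^sup>2 / 8)"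
    by (rule Hoeffdings_lemma_nn_integral_0[OF \<open>l > 0\<close>])
  moreover have "(\<integral>\<^sup>+x. exp (l * Y x) \<partial>?M) = ennreal (\<Sum>x\<in>A. exp (l * Y x)) / ennreal (card A)"
    using \<open>finite A\<close> \<open>A \<noteq> {}\<close> by (simp add: nn_integral_pmf_of_set ennreal_of_nat_eq_real_of_nat)
  moreover have "\<dots> = ennreal ((\<Sum>x\<in>A. exp (l * Y x)) / card A)"
    using \<open>finite A\<close> \<open>A \<noteq> {}\<close> by (intro divide_ennreal) (auto simp: sum_nonneg card_gt_0_iff)
  ultimately have "(\<Sum>x\<in>A. exp (l * Y x)) / card A \<le> exp (l\<^sup>2 * (b - a)\<^sup>2 / 8)"
    by simp
  then show ?thesis
    using \<open>finite A\<close> \<open>A \<noteq> {}\<close> by (simp add: divide_simps card_gt_0_iff mult.commute)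
qed

definition average :: "'c set \<Rightarrow> ('c \<Rightarrow> real) \<Rightarrow> real" where
  "average A g = (\<Sum>x\<in>A. g x) / card A"

lemma sum_fibre_average:
  assumes "finite C"
  shows "(\<Sum>x\<in>C. average {y\<in>C. f y = f x} g) = (\<Sum>x\<in>C. g x)"
proof -
  have group: "(\<Sum>x\<in>C. h x) = (\<Sum>a\<in>f ` C. \<Sum>x\<in>{y\<in>C. f y = a}. h x)" for h :: "_ \<Rightarrow> real"
    by (rule sum.group[OF assms finite_imageI[OF assms] subset_refl, symmetric])
  have "(\<Sum>x\<in>{y\<in>C. f y = a}. average {y\<in>C. f y = a} g) = (\<Sum>x\<in>{y\<in>C. f y = a}. g x)"
    if "a \<in> f ` C" for a
    using that assms by (auto simp: average_def card_gt_0_iff)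
  then show ?thesis
    by (subst (1 2) group) (auto intro!: sum.cong)
qed

lemma sum_exp_fibre_le:
  fixes g :: "'b \<Rightarrow> real" and E :: real
  assumes "finite C" and "E \<ge> 0"
    and fibre: "\<And>x. x \<in> C \<Longrightarrow>
      (\<Sum>y\<in>{y\<in>C. f y = f x}. exp (l * (average {y\<in>C. f y = f x} g - g y)))
        \<le> card {y\<in>C. f y = f x} * E"
  shows "(\<Sum>x\<in>C. exp (l * (m - g x)))
           \<le> E * (\<Sum>x\<in>C. exp (l * (m - average {y\<in>C. f y = f x} g)))"
proof -
  define F where "F a = {y\<in>C. f y = a}" for a
  define \<nu> where "\<nu> a = average (F a) g" for a
  have group: "(\<Sum>x\<in>C. h x) = (\<Sum>a\<in>f ` C. \<Sum>x\<in>F a. h x)" for h :: "_ \<Rightarrow> real"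
    unfolding F_def by (rule sum.group[OF assms(1) finite_imageI[OF assms(1)] subset_refl, symmetric])
  have "(\<Sum>x\<in>C. exp (l * (m - g x)))
          = (\<Sum>a\<in>f ` C. exp (l * (m - \<nu> a)) * (\<Sum>x\<in>F a. exp (l * (\<nu> a - g x))))"
    by (subst group) (simp add: sum_distrib_left algebra_simps flip: exp_add)
  also have "\<dots> \<le> (\<Sum>a\<in>f ` C. exp (l * (m - \<nu> a)) * (card (F a) * E))"
    using fibre by (intro sum_mono mult_left_mono) (auto simp: F_def \<nu>_def)
  also have "\<dots> = E * (\<Sum>a\<in>f ` C. \<Sum>x\<in>F a. exp (l * (m - \<nu> a)))"
    by (simp add: sum_distrib_left mult_ac)
  also have "\<dots> = E * (\<Sum>x\<in>C. exp (l * (m - \<nu> (f x))))"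
    by (simp only: group[of "\<lambda>x. exp (l * (m - \<nu> (f x)))"]) (auto simp: F_def intro!: sum.cong)
  finally show ?thesis
    by (simp add: F_def \<nu>_def)
qed

lemma sum_exp_fibre_average_le:
  fixes g :: "'b \<Rightarrow> real"
  assumes "finite C" and "l \<ge> 0"
    and differences: "\<And>x y. x \<in> C \<Longrightarrow> y \<in> C \<Longrightarrow>
      \<bar>average {z\<in>C. f z = f x} g - average {z\<in>C. f z = f y} g\<bar> \<le> c"
  shows "(\<Sum>x\<in>C. exp (l * (average C g - average {y\<in>C. f y = f x} g))) \<le> card C * exp (l\<^sup>2 * c\<^sup>2 / 8)"
proof (cases "C = {}")
  case False
  define m where "m = average C g"
  define \<nu> where "\<nu> x = average {y\<in>C. f y = f x} g" for x
  define T where "T = \<nu> ` C"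
  have "finite T" "T \<noteq> {}"
    using \<open>finite C\<close> False by (auto simp: T_def)
  obtain x1 x2 where "x1 \<in> C" "Max T = \<nu> x1" "x2 \<in> C" "Min T = \<nu> x2"
    using Max_in[OF \<open>finite T\<close> \<open>T \<noteq> {}\<close>] Min_in[OF \<open>finite T\<close> \<open>T \<noteq> {}\<close>]
    unfolding T_def by blast
  then have "Max T - Min T \<le> c"
    using differences[of x1 x2] by (simp add: \<nu>_def)
  moreover have "Min T \<le> Max T"
    using \<open>finite T\<close> \<open>T \<noteq> {}\<close> by simp
  ultimately have range: "((m - Min T) - (m - Max T))\<^sup>2 \<le> c\<^sup>2"
    by (intro power_mono) auto
  have "(\<Sum>x\<in>C. m - \<nu> x) = 0"
    using \<open>finite C\<close> False sum_fibre_average[OF \<open>finite C\<close>, of f g]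
    by (simp add: sum_subtractf m_def \<nu>_def average_def card_gt_0_iff)
  then have "(\<Sum>x\<in>C. exp (l * (m - \<nu> x))) \<le> card C * exp (l\<^sup>2 * ((m - Min T) - (m - Max T))\<^sup>2 / 8)"
    using \<open>finite C\<close> \<open>finite T\<close> \<open>l \<ge> 0\<close>
    by (intro Hoeffdings_lemma_sum_exp) (auto simp: T_def)
  also have "\<dots> \<le> card C * exp (l\<^sup>2 * c\<^sup>2 / 8)"
    using range by (intro mult_left_mono) (simp_all add: mult_left_mono divide_right_mono)
  finally show ?thesis
    by (simp add: m_def \<nu>_def)
qed simp

definition extending :: "'b list set \<Rightarrow> 'b list \<Rightarrow> 'b list set" where
  "extending S p = {xs\<in>S. take (length p) xs = p}"

lemma extending_snoc:
  assumes "\<And>xs. xs \<in> S \<Longrightarrow> length p < length xs"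
  shows "extending S (p @ [a]) = {xs\<in>extending S p. xs ! length p = a}"
  using assms by (auto simp: extending_def take_Suc_conv_app_nth)

(* Azuma's inequality for the Doob martingale p \<mapsto> average (extending S p) g, which reveals the
   list one entry at a time; the hypothesis differences bounds its increments. *)
lemma sum_exp_deviation_extending_le:
  fixes g :: "'b list \<Rightarrow> real"
  assumes "finite S" and length: "\<And>xs. xs \<in> S \<Longrightarrow> length xs = length p + r"
    and differences: "\<And>p a b. extending S (p @ [a]) \<noteq> {} \<Longrightarrow> extending S (p @ [b]) \<noteq> {} \<Longrightarrow>
      \<bar>average (extending S (p @ [a])) g - average (extending S (p @ [b])) g\<bar> \<le> c"
    and "l \<ge> 0"
  shows "(\<Sum>xs\<in>extending S p. exp (l * (average (extending S p) g - g xs)))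
           \<le> card (extending S p) * exp (l\<^sup>2 * c\<^sup>2 * r / 8)"
  using length
proof (induction r arbitrary: p)
  case 0
  then have "extending S p \<subseteq> {p}"
    by (auto simp: extending_def)
  then consider "extending S p = {}" | "extending S p = {p}"
    by blast
  then show ?case
    by cases (auto simp: average_def)
next
  case (Suc r)
  define C where "C = extending S p"
  define m where "m = average C g"
  have "finite C"
    using \<open>finite S\<close> by (simp add: C_def extending_def)
  have fibre: "{ys\<in>C. ys ! length p = a} = extending S (p @ [a])" for a
    unfolding C_def using Suc.prems by (subst extending_snoc) auto
  have "(\<Sum>xs\<in>C. exp (l * (m - g xs)))
      \<le> exp (l\<^sup>2 * c\<^sup>2 * r / 8) * (\<Sum>xs\<in>C. exp (l * (m - average {ys\<in>C. ys ! length p = xs ! length p} g)))"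
    using \<open>finite C\<close>
  proof (rule sum_exp_fibre_le)
    fix xs
    show "(\<Sum>ys\<in>{ys\<in>C. ys ! length p = xs ! length p}.
             exp (l * (average {ys\<in>C. ys ! length p = xs ! length p} g - g ys)))
          \<le> card {ys\<in>C. ys ! length p = xs ! length p} * exp (l\<^sup>2 * c\<^sup>2 * r / 8)"
      unfolding fibre using Suc.prems by (intro Suc.IH) auto
  qed simp
  also have "(\<Sum>xs\<in>C. exp (l * (m - average {ys\<in>C. ys ! length p = xs ! length p} g)))
      \<le> card C * exp (l\<^sup>2 * c\<^sup>2 / 8)"
    unfolding m_def using \<open>finite C\<close> \<open>l \<ge> 0\<close>
  proof (rule sum_exp_fibre_average_le)
    fix xs ys
    assume "xs \<in> C" "ys \<in> C"
    then have "extending S (p @ [xs ! length p]) \<noteq> {}" "extending S (p @ [ys ! length p]) \<noteq> {}"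
      unfolding fibre[symmetric] by auto
    then show "\<bar>average {zs\<in>C. zs ! length p = xs ! length p} g
        - average {zs\<in>C. zs ! length p = ys ! length p} g\<bar> \<le> c"
      unfolding fibre by (rule differences)
  qed
  finally show ?case
    by (simp add: C_def m_def mult_ac flip: exp_add) (simp add: field_simps)
qed

lemma card_lower_deviation_le:
  fixes g :: "'b list \<Rightarrow> real"
  assumes "finite S" and length: "\<And>xs. xs \<in> S \<Longrightarrow> length xs = L"
    and differences: "\<And>p a b. extending S (p @ [a]) \<noteq> {} \<Longrightarrow> extending S (p @ [b]) \<noteq> {} \<Longrightarrow>
      \<bar>average (extending S (p @ [a])) g - average (extending S (p @ [b])) g\<bar> \<le> c"
    and "t \<ge> 0"
  shows "card {xs\<in>S. g xs \<le> average S g - t} \<le> card S * exp (- 2 * t\<^sup>2 / (L * c\<^sup>2))"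
proof (cases "L * c\<^sup>2 = 0")
  case True
  have "card {xs\<in>S. g xs \<le> average S g - t} \<le> card S"
    using \<open>finite S\<close> by (intro card_mono) auto
  with True show ?thesis
    by auto
next
  case False
  define l where "l = 4 * t / (L * c\<^sup>2)"
  define Bad where "Bad = {xs\<in>S. g xs \<le> average S g - t}"
  have "l \<ge> 0"
    using \<open>t \<ge> 0\<close> by (simp add: l_def)
  have "card Bad * exp (l * t) = (\<Sum>xs\<in>Bad. exp (l * t))"
    by simp
  also have "\<dots> \<le> (\<Sum>xs\<in>Bad. exp (l * (average S g - g xs)))"
    using \<open>l \<ge> 0\<close> by (intro sum_mono) (auto simp: Bad_def mult_left_mono)
  also have "\<dots> \<le> (\<Sum>xs\<in>S. exp (l * (average S g - g xs)))"
    using \<open>finite S\<close> by (intro sum_mono2) (auto simp: Bad_def)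
  also have "\<dots> \<le> card S * exp (l\<^sup>2 * c\<^sup>2 * L / 8)"
    using sum_exp_deviation_extending_le[OF \<open>finite S\<close> _ differences \<open>l \<ge> 0\<close>, of "[]" L] length
    by (simp add: extending_def)
  finally have "card Bad \<le> card S * exp (l\<^sup>2 * c\<^sup>2 * L / 8) / exp (l * t)"
    by (simp add: field_simps)
  also have "\<dots> = card S * exp (l\<^sup>2 * c\<^sup>2 * L / 8 - l * t)"
    by (simp add: exp_diff)
  also have "l\<^sup>2 * c\<^sup>2 * L / 8 - l * t = - 2 * t\<^sup>2 / (L * c\<^sup>2)"
    using False by (simp add: l_def field_simps power2_eq_square)
  finally show ?thesis
    by (simp add: Bad_def)
qed

section \<open>Partitions into blocks of equal size\<close>

lemma eq_partitions_subset_Pow: "P \<in> eq_partitions V q \<Longrightarrow> P \<subseteq> Pow V"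
  by (auto simp: eq_partitions_def)

lemma finite_eq_partitions_member: "finite V \<Longrightarrow> P \<in> eq_partitions V q \<Longrightarrow> finite P"
  by (meson eq_partitions_subset_Pow finite_Pow_iff finite_subset)

lemma card_Union_eq_partitions:
  assumes "P \<in> eq_partitions V q" and "finite V" and "I \<subseteq> P"
  shows "card (\<Union>I) = q * card I"
proof -
  have "I \<subseteq> Pow V"
    using assms eq_partitions_subset_Pow by blast
  then have "card (\<Union>I) = sum card I"
    using assms by (intro card_Union_disjoint)
      (auto simp: eq_partitions_def intro: pairwise_subset finite_subset)
  also have "\<dots> = sum (\<lambda>_. q) I"
    using assms by (intro sum.cong) (auto simp: eq_partitions_def)
  finally show ?thesis
    by simp
qed

lemma inj_on_Union_eq_partitions:
  assumes "P \<in> eq_partitions V q" and "q > 0"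
  shows "inj_on Union (Pow P)"
proof -
  have "I \<subseteq> J" if "I \<subseteq> P" "J \<subseteq> P" "\<Union>I = \<Union>J" for I J
  proof
    fix B
    assume "B \<in> I"
    then have "card B = q"
      using assms that by (auto simp: eq_partitions_def)
    then have "B \<noteq> {}"
      using \<open>q > 0\<close> by auto
    then obtain x where "x \<in> B"
      by blast
    then obtain B' where "B' \<in> J" "x \<in> B'"
      using \<open>B \<in> I\<close> \<open>\<Union>I = \<Union>J\<close> by blast
    then have "\<not> disjnt B B'"
      using \<open>x \<in> B\<close> by (auto simp: disjnt_def)
    moreover have "disjoint P" "B \<in> P" "B' \<in> P"
      using assms(1) that \<open>B \<in> I\<close> \<open>B' \<in> J\<close> by (auto simp: eq_partitions_def)
    ultimately have "B = B'"
      by (metis pairwiseD)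
    with \<open>B' \<in> J\<close> show "B \<in> J"
      by simp
  qed
  then show ?thesis
    by (intro inj_onI subset_antisym) simp_all
qed

lemma card_eq_partitions_containing_le:
  assumes "P \<in> eq_partitions V q" and "finite V"
  shows "card {B\<in>P. x \<in> B} \<le> 1"
proof -
  have "B = B'" if "B \<in> P" "B' \<in> P" "x \<in> B" "x \<in> B'" for B B'
    using assms that unfolding eq_partitions_def pairwise_def disjnt_def by blast
  then show ?thesis
    using finite_eq_partitions_member[OF assms(2,1)] by (auto simp: card_le_Suc0_iff_eq)
qed

definition block :: "nat \<Rightarrow> 'a list \<Rightarrow> nat \<Rightarrow> 'a set" where
  "block q xs j = set (take q (drop (j * q) xs))"

definition block_partition :: "nat \<Rightarrow> 'a list \<Rightarrow> 'a set set" where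
  "block_partition q xs = block q xs ` {..<length xs div q}"

lemma mem_block_iff: "x \<in> block q xs j \<longleftrightarrow> (\<exists>r<q. j * q + r < length xs \<and> x = xs ! (j * q + r))"
proof
  assume "\<exists>r<q. j * q + r < length xs \<and> x = xs ! (j * q + r)"
  then obtain r where "r < q" "j * q + r < length xs" "x = xs ! (j * q + r)"
    by blast
  then show "x \<in> block q xs j"
    unfolding block_def in_set_conv_nth by (intro exI[of _ r]) auto
qed (auto simp: block_def in_set_conv_nth)

lemma block_map: "block q (map f xs) j = f ` block q xs j"
  by (simp add: block_def take_map drop_map)

lemma block_partition_map: "block_partition q (map f xs) = image f ` block_partition q xs"
  by (simp add: block_partition_def block_map image_image)

lemma Union_block_partition_subset: "\<Union>(block_partition q xs) \<subseteq> set xs"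
  by (auto simp: block_partition_def block_def dest: in_set_takeD in_set_dropD)

lemma block_partition_in_eq_partitions:
  assumes "distinct xs" and "q dvd length xs" and "q > 0"
  shows "block_partition q xs \<in> eq_partitions (set xs) q"
proof -
  have card_block: "card (block q xs j) = q" if "j < length xs div q" for j
  proof -
    obtain m where "length xs = m * q"
      using assms(2) by (metis dvd_def mult.commute)
    with that \<open>q > 0\<close> have "Suc j * q \<le> length xs"
      by (simp del: mult_Suc add: mult_le_mono1)
    then show ?thesis
      using assms(1) by (simp add: block_def distinct_card)
  qed
  have cover: "xs ! i \<in> block q xs (i div q)" "i div q < length xs div q" if "i < length xs" for i
  proof -
    show "xs ! i \<in> block q xs (i div q)"
      unfolding mem_block_iff using that \<open>q > 0\<close> by (intro exI[of _ "i mod q"]) simp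
    show "i div q < length xs div q"
      using that assms(2) \<open>q > 0\<close> by (auto simp: dvd_def less_mult_imp_div_less mult.commute)
  qed
  have same_block: "j = j'" if blocks: "x \<in> block q xs j" "x \<in> block q xs j'" for x j j'
  proof -
    obtain r r' where "r < q" "r' < q" "j * q + r < length xs" "j' * q + r' < length xs"
      "xs ! (j * q + r) = xs ! (j' * q + r')"
      using blocks unfolding mem_block_iff by metis
    then have "j * q + r = j' * q + r'"
      using assms(1) by (simp add: nth_eq_iff_index_eq)
    then have "(j * q + r) div q = (j' * q + r') div q"
      by simp
    then show ?thesis
      using \<open>r < q\<close> \<open>r' < q\<close> by simp
  qed
  have "disjoint (block_partition q xs)"
    unfolding block_partition_def
    by (rule pairwise_imageI) (meson disjnt_iff same_block)
  moreover note Union_block_partition_subset[of q xs]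
  moreover have "set xs \<subseteq> \<Union>(block_partition q xs)"
  proof
    fix x
    assume "x \<in> set xs"
    then obtain i where "i < length xs" "x = xs ! i"
      by (auto simp: in_set_conv_nth)
    with cover show "x \<in> \<Union>(block_partition q xs)"
      unfolding block_partition_def by blast
  qed
  ultimately show ?thesis
    using card_block unfolding eq_partitions_def block_partition_def by blast
qed

lemma card_block_partition:
  assumes "distinct xs" and "length xs = q * n" and "q > 0"
  shows "card (block_partition q xs) = n"
proof -
  have partition: "block_partition q xs \<in> eq_partitions (set xs) q"
    using assms by (intro block_partition_in_eq_partitions) auto
  then have "card (\<Union>(block_partition q xs)) = q * card (block_partition q xs)"
    by (rule card_Union_eq_partitions) auto
  moreover have "\<Union>(block_partition q xs) = set xs"
    using partition by (simp add: eq_partitions_def)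
  ultimately show ?thesis
    using assms by (simp add: distinct_card)
qed

lemma block_partition_permutations_of_set:
  assumes "xs \<in> permutations_of_set V" and "card V = q * n" and "q > 0"
  shows "block_partition q xs \<in> eq_partitions V q" and "card (block_partition q xs) = n"
proof -
  have "distinct xs" "set xs = V" "length xs = q * n"
    using assms by (auto simp: permutations_of_set_def length_finite_permutations_of_set)
  then show "block_partition q xs \<in> eq_partitions V q" "card (block_partition q xs) = n"
    using block_partition_in_eq_partitions[of xs q] card_block_partition[of xs q n] \<open>q > 0\<close>
    by auto
qed

lemma take_drop_concat_equal_length:
  assumes "\<forall>ys\<in>set Ls. length ys = q" and "j < length Ls"
  shows "take q (drop (j * q) (concat Ls)) = Ls ! j"
  using assms
proof (induction Ls arbitrary: j)
  case (Cons ys Ls)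
  then show ?case
    by (cases j) (auto simp: add.commute[of q])
qed simp

lemma block_partition_concat:
  assumes "\<forall>ys\<in>set Ls. length ys = q" and "q > 0"
  shows "block_partition q (concat Ls) = set ` set Ls"
proof -
  have "length (concat Ls) = length Ls * q"
    using assms(1) by (induction Ls) auto
  then have "length (concat Ls) div q = length Ls"
    using \<open>q > 0\<close> by simp
  moreover have "block q (concat Ls) j = set (Ls ! j)" if "j < length Ls" for j
    using take_drop_concat_equal_length[OF assms(1) that] by (simp add: block_def)
  ultimately show ?thesis
    by (auto simp: block_partition_def set_conv_nth)
qed

lemma block_partition_surj:
  assumes "P \<in> eq_partitions V q" and "finite V" and "q > 0"
  shows "\<exists>xs\<in>permutations_of_set V. block_partition q xs = P"
proof -
  obtain Bs where Bs: "set Bs = P" "distinct Bs"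
    using finite_distinct_list[OF finite_eq_partitions_member[OF assms(2,1)]] by blast
  define order where "order B = (SOME ys. ys \<in> permutations_of_set B)" for B :: "'a set"
  have order: "order B \<in> permutations_of_set B" if "B \<in> P" for B
  proof -
    have "finite B"
      using that assms(2) eq_partitions_subset_Pow[OF assms(1)] by (auto intro: finite_subset)
    then show ?thesis
      unfolding order_def by (simp add: some_in_eq)
  qed
  define Ls where "Ls = map order Bs"
  have set_Ls: "set ` set Ls = P"
    using order Bs(1) by (force simp: Ls_def permutations_of_set_def)
  have "length (order B) = q" if "B \<in> P" for B
    using length_finite_permutations_of_set[OF order[OF that]] assms(1) that
    by (simp add: eq_partitions_def)
  then have length_Ls: "\<forall>ys\<in>set Ls. length ys = q"
    using Bs(1) by (auto simp: Ls_def)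
  have "inj_on order P"
    using order by (intro inj_onI) (metis permutations_of_setD(1))
  have "distinct (concat Ls)"
  proof (rule distinct_concat)
    show "distinct Ls"
      using \<open>inj_on order P\<close> Bs by (simp add: Ls_def distinct_map)
    show "distinct ys" if "ys \<in> set Ls" for ys
      using that order Bs(1) by (auto simp: Ls_def permutations_of_set_def)
    show "set ys \<inter> set zs = {}" if yz: "ys \<in> set Ls" "zs \<in> set Ls" "ys \<noteq> zs" for ys zs
    proof -
      obtain B C where "B \<in> P" "C \<in> P" "ys = order B" "zs = order C"
        using yz(1,2) Bs(1) by (auto simp: Ls_def)
      moreover have "disjoint P"
        using assms(1) by (simp add: eq_partitions_def)
      ultimately show ?thesis
        using yz(3) order pairwiseD[of disjnt P B C] by (auto simp: disjnt_def permutations_of_set_def)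
    qed
  qed
  moreover have "set (concat Ls) = V"
    using set_Ls assms(1) by (auto simp: eq_partitions_def)
  ultimately have "concat Ls \<in> permutations_of_set V"
    by (intro permutations_of_setI)
  moreover have "block_partition q (concat Ls) = P"
    using block_partition_concat[OF length_Ls \<open>q > 0\<close>] set_Ls by simp
  ultimately show ?thesis
    by blast
qed

section \<open>Relabelling orderings\<close>

lemma bij_betw_map_permutations_of_set:
  assumes "bij_betw \<sigma> V V"
  shows "bij_betw (map \<sigma>) (permutations_of_set V) (permutations_of_set V)"
proof -
  have "inj_on \<sigma> V" "\<sigma> ` V = V"
    using assms by (auto simp: bij_betw_def)
  then have "inj_on (map \<sigma>) (permutations_of_set V)"
    by (intro inj_onI) (auto simp: permutations_of_set_def inj_on_map_eq_map)
  moreover have "map \<sigma> ` permutations_of_set V = permutations_of_set V"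
    using permutations_of_set_image_inj[OF \<open>inj_on \<sigma> V\<close>] \<open>\<sigma> ` V = V\<close> by simp
  ultimately show ?thesis
    by (simp add: bij_betw_def)
qed

lemma card_permutations_of_set_le_relabel:
  assumes "bij_betw \<sigma> V V" and "\<And>xs. xs \<in> permutations_of_set V \<Longrightarrow> \<Phi> xs \<Longrightarrow> \<Psi> (map \<sigma> xs)"
  shows "card {xs\<in>permutations_of_set V. \<Phi> xs} \<le> card {xs\<in>permutations_of_set V. \<Psi> xs}"
  using bij_betw_map_permutations_of_set[OF assms(1)] assms(2)
  by (intro card_inj_on_le[where f = "map \<sigma>"]) (auto simp: bij_betw_def intro: inj_on_subset)

lemma ex_bij_betw_map_eq:
  assumes "xs \<in> permutations_of_set V" and "ys \<in> permutations_of_set V"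
  obtains \<sigma> where "bij_betw \<sigma> V V" and "map \<sigma> xs = ys"
proof
  define \<sigma> where "\<sigma> v = the (map_of (zip xs ys) v)" for v
  have "length xs = length ys" "distinct xs" "set xs = V" "set ys = V"
    using assms by (auto simp: permutations_of_set_def length_finite_permutations_of_set)
  then show "map \<sigma> xs = ys"
    by (intro nth_equalityI) (simp_all add: \<sigma>_def map_of_zip_nth)
  then have "\<sigma> ` V = V"
    using \<open>set xs = V\<close> \<open>set ys = V\<close> by (metis set_map)
  moreover have "finite V"
    using \<open>set xs = V\<close> by auto
  ultimately show "bij_betw \<sigma> V V"
    by (simp add: bij_betw_def eq_card_imp_inj_on)
qed

lemma ex_bij_betw_image_eq:
  assumes "finite V" and "e \<subseteq> V" and "e' \<subseteq> V" and "card e = card e'"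
  obtains \<sigma> where "bij_betw \<sigma> V V" and "\<sigma> ` e = e'"
proof -
  have "finite e" "finite e'"
    using assms by (meson finite_subset)+
  then obtain f where f: "bij_betw f e e'"
    using finite_same_card_bij \<open>card e = card e'\<close> by metis
  have "card (V - e) = card (V - e')"
    using assms \<open>finite e\<close> \<open>finite e'\<close> by (simp add: card_Diff_subset)
  then obtain g where g: "bij_betw g (V - e) (V - e')"
    using finite_same_card_bij \<open>finite V\<close> by (meson finite_Diff)
  define \<sigma> where "\<sigma> x = (if x \<in> e then f x else g x)" for x
  have "bij_betw \<sigma> e e'"
    using f by (rule bij_betw_cong[THEN iffD1, rotated]) (simp add: \<sigma>_def)
  moreover have "bij_betw \<sigma> (V - e) (V - e')"
    using g by (rule bij_betw_cong[THEN iffD1, rotated]) (simp add: \<sigma>_def)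
  ultimately have "bij_betw \<sigma> (e \<union> (V - e)) (e' \<union> (V - e'))"
    by (rule bij_betw_combine) auto
  moreover have "e \<union> (V - e) = V" "e' \<union> (V - e') = V"
    using assms by auto
  ultimately have "bij_betw \<sigma> V V"
    by simp
  moreover have "\<sigma> ` e = e'"
    using \<open>bij_betw \<sigma> e e'\<close> by (simp add: bij_betw_def)
  ultimately show ?thesis
    by (rule that)
qed

lemma card_block_partition_fibre_le:
  assumes "xs \<in> permutations_of_set V" and "ys \<in> permutations_of_set V"
  shows "card {zs\<in>permutations_of_set V. block_partition q zs = block_partition q xs}
           \<le> card {zs\<in>permutations_of_set V. block_partition q zs = block_partition q ys}"
proof -
  obtain \<sigma> where "bij_betw \<sigma> V V" "map \<sigma> xs = ys"
    using ex_bij_betw_map_eq[OF assms] .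
  then show ?thesis
    by (intro card_permutations_of_set_le_relabel) (auto simp: block_partition_map)
qed

lemma card_filter_image_ratio:
  assumes "finite S"
    and fibres: "\<And>x y. x \<in> S \<Longrightarrow> y \<in> S \<Longrightarrow> card {z\<in>S. f z = f x} = card {z\<in>S. f z = f y}"
  shows "real (card {y\<in>f ` S. \<Phi> y}) / card (f ` S) = real (card {x\<in>S. \<Phi> (f x)}) / card S"
proof (cases "S = {}")
  case False
  then obtain x0 where "x0 \<in> S"
    by blast
  define K where "K = card {z\<in>S. f z = f x0}"
  have "K > 0"
    using \<open>finite S\<close> \<open>x0 \<in> S\<close> by (auto simp: K_def card_gt_0_iff)
  have count: "card {x\<in>S. \<Psi> (f x)} = K * card {y\<in>f ` S. \<Psi> y}" for \<Psi>
  proof -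
    have "(\<Sum>y\<in>{y\<in>f ` S. \<Psi> y}. card {x\<in>{x\<in>S. \<Psi> (f x)}. f x = y}) = card {x\<in>S. \<Psi> (f x)}"
      using \<open>finite S\<close> sum.group[of "{x\<in>S. \<Psi> (f x)}" "{y\<in>f ` S. \<Psi> y}" f "\<lambda>_. 1::nat"]
      by auto
    then have "card {x\<in>S. \<Psi> (f x)} = (\<Sum>y\<in>{y\<in>f ` S. \<Psi> y}. card {x\<in>{x\<in>S. \<Psi> (f x)}. f x = y})"
      by (rule sym)
    also have "\<dots> = (\<Sum>y\<in>{y\<in>f ` S. \<Psi> y}. K)"
    proof (rule sum.cong[OF refl])
      fix y
      assume "y \<in> {y\<in>f ` S. \<Psi> y}"
      then obtain x where "x \<in> S" "y = f x" "\<Psi> y"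
        by blast
      then have "{x\<in>{x\<in>S. \<Psi> (f x)}. f x = y} = {z\<in>S. f z = f x}"
        by auto
      then show "card {x\<in>{x\<in>S. \<Psi> (f x)}. f x = y} = K"
        unfolding K_def using fibres[OF \<open>x \<in> S\<close> \<open>x0 \<in> S\<close>] by simp
    qed
    finally show ?thesis
      by simp
  qed
  show ?thesis
    using count[of \<Phi>] count[of "\<lambda>_. True"] \<open>K > 0\<close> by simp
qed simp

lemma card_eq_partitions_filter_ratio:
  assumes "finite V" and "card V = q * n" and "q > 0"
  shows "real (card {P\<in>eq_partitions V q. \<Phi> P}) / card (eq_partitions V q)
           = real (card {xs\<in>permutations_of_set V. \<Phi> (block_partition q xs)}) / card (permutations_of_set V)"
proof -
  have "block_partition q ` permutations_of_set V = eq_partitions V q"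
    using block_partition_permutations_of_set(1)[OF _ assms(2,3)] block_partition_surj[OF _ assms(1,3)]
    by auto
  moreover have "real (card {P\<in>block_partition q ` permutations_of_set V. \<Phi> P})
        / card (block_partition q ` permutations_of_set V)
      = real (card {xs\<in>permutations_of_set V. \<Phi> (block_partition q xs)}) / card (permutations_of_set V)"
    by (intro card_filter_image_ratio) (auto intro!: antisym card_block_partition_fibre_le)
  ultimately show ?thesis
    by simp
qed

lemma ratio_card_filter_ge:
  fixes \<delta> :: real
  assumes "finite S" and "S \<noteq> {}" and "real (card {x\<in>S. \<not> P x}) \<le> card S * \<delta>"
  shows "real (card {x\<in>S. P x}) / card S \<ge> 1 - \<delta>"
proof -
  have "card {x\<in>S. P x} + card {x\<in>S. \<not> P x} = card S"
    using \<open>finite S\<close> by (subst card_Un_disjoint[symmetric]) (auto intro!: arg_cong[where f = card])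
  moreover have "card S > 0"
    using assms(1,2) by (simp add: card_gt_0_iff)
  ultimately show ?thesis
    using assms(3) by (simp add: field_simps flip: of_nat_add)
qed

lemma abs_average_diff_le_bij:
  fixes g :: "'b \<Rightarrow> real"
  assumes "finite A" and "A \<noteq> {}" and "bij_betw \<phi> A B"
    and close: "\<And>x. x \<in> A \<Longrightarrow> \<bar>g x - g (\<phi> x)\<bar> \<le> c"
  shows "\<bar>average A g - average B g\<bar> \<le> c"
proof -
  have "card B = card A" "(\<Sum>x\<in>B. g x) = (\<Sum>x\<in>A. g (\<phi> x))"
    using assms(3) by (simp_all add: bij_betw_same_card sum.reindex_bij_betw[symmetric])
  moreover have "card A > 0"
    using assms(1,2) by (simp add: card_gt_0_iff)
  ultimately have "\<bar>average A g - average B g\<bar> = \<bar>\<Sum>x\<in>A. g x - g (\<phi> x)\<bar> / card A"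
    by (simp add: average_def sum_subtractf flip: diff_divide_distrib)
  also have "\<dots> \<le> (\<Sum>x\<in>A. c) / card A"
    using close by (intro divide_right_mono order_trans[OF sum_abs sum_mono]) auto
  also have "\<dots> = c"
    using \<open>card A > 0\<close> by simp
  finally show ?thesis .
qed

lemma extending_permutations_of_set_snocD:
  assumes "xs \<in> extending (permutations_of_set V) (p @ [a])"
  shows "a \<in> V" and "a \<notin> set p"
proof -
  have "xs \<in> permutations_of_set V" "take (Suc (length p)) xs = p @ [a]"
    using assms by (auto simp: extending_def)
  then have "distinct (p @ [a])" "set (p @ [a]) \<subseteq> V"
    by (metis distinct_take permutations_of_setD(2), metis set_take_subset permutations_of_setD(1))
  then show "a \<in> V" "a \<notin> set p"
    by auto
qed

lemma map_transpose_mem_extending: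
  assumes "xs \<in> extending (permutations_of_set V) (p @ [a])" and "b \<in> V" and "b \<notin> set p"
  shows "map (Transposition.transpose a b) xs \<in> extending (permutations_of_set V) (p @ [b])"
proof -
  have "a \<in> V" "a \<notin> set p"
    using extending_permutations_of_set_snocD[OF assms(1)] by auto
  have "xs \<in> permutations_of_set V" "take (Suc (length p)) xs = p @ [a]"
    using assms(1) by (auto simp: extending_def)
  then have "map (Transposition.transpose a b) xs \<in> permutations_of_set V"
    using bij_betw_map_permutations_of_set[of "Transposition.transpose a b" V] \<open>a \<in> V\<close> \<open>b \<in> V\<close>
    by (auto simp: bij_betw_def)
  moreover have "map (Transposition.transpose a b) p = p"
    using \<open>a \<notin> set p\<close> \<open>b \<notin> set p\<close> by (intro map_idI) (metis transpose_apply_other)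
  ultimately show ?thesis
    using \<open>take (Suc (length p)) xs = p @ [a]\<close> by (simp add: extending_def take_map)
qed

lemma abs_average_extending_permutations_of_set_le:
  fixes g :: "'a list \<Rightarrow> real"
  assumes transposition: "\<And>xs a b. xs \<in> permutations_of_set V \<Longrightarrow> a \<in> V \<Longrightarrow> b \<in> V \<Longrightarrow>
      \<bar>g xs - g (map (Transposition.transpose a b) xs)\<bar> \<le> c"
    and "extending (permutations_of_set V) (p @ [a]) \<noteq> {}"
    and "extending (permutations_of_set V) (p @ [b]) \<noteq> {}"
  shows "\<bar>average (extending (permutations_of_set V) (p @ [a])) g
           - average (extending (permutations_of_set V) (p @ [b])) g\<bar> \<le> c"
proof -
  let ?A = "extending (permutations_of_set V) (p @ [a])"
  let ?B = "extending (permutations_of_set V) (p @ [b])"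
  let ?\<tau> = "Transposition.transpose a b"
  obtain xs ys where "xs \<in> ?A" "ys \<in> ?B"
    using assms(2,3) by blast
  then have "a \<in> V" "a \<notin> set p" "b \<in> V" "b \<notin> set p"
    by (simp_all add: extending_permutations_of_set_snocD)
  have "bij_betw (map ?\<tau>) ?A ?B"
  proof (rule bij_betw_byWitness[where f' = "map ?\<tau>"])
    show "\<forall>xs\<in>?A. map ?\<tau> (map ?\<tau> xs) = xs" "\<forall>xs\<in>?B. map ?\<tau> (map ?\<tau> xs) = xs"
      by (simp_all add: map_idI)
    show "map ?\<tau> ` ?A \<subseteq> ?B"
      using map_transpose_mem_extending[of _ V p a b] \<open>b \<in> V\<close> \<open>b \<notin> set p\<close> by auto
    show "map ?\<tau> ` ?B \<subseteq> ?A"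
      using map_transpose_mem_extending[of _ V p b a] \<open>a \<in> V\<close> \<open>a \<notin> set p\<close>
      by (auto simp: transpose_commute)
  qed
  moreover have "finite ?A"
    by (rule finite_subset[of _ "permutations_of_set V"]) (auto simp: extending_def)
  ultimately show ?thesis
    using assms(2) transposition \<open>a \<in> V\<close> \<open>b \<in> V\<close>
    by (intro abs_average_diff_le_bij) (auto simp: extending_def)
qed

section \<open>The squashed hypergraph\<close>

definition unions_of :: "nat \<Rightarrow> 'a set set \<Rightarrow> 'a set set" where
  "unions_of k P = Union ` {I. I \<subseteq> P \<and> card I = k}"

lemma finite_squash: "finite P \<Longrightarrow> finite (squash H P k)"
  by (rule finite_subset[of _ "Pow P"]) (auto simp: squash_def)

lemma card_squash_eq_partitions:
  assumes "P \<in> eq_partitions V q" and "q > 0"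
  shows "card (squash H P k) = card (H \<inter> unions_of k P)"
proof (rule bij_betw_same_card)
  have "inj_on Union (squash H P k)"
    using inj_on_Union_eq_partitions[OF assms] by (rule inj_on_subset) (auto simp: squash_def)
  moreover have "Union ` squash H P k = H \<inter> unions_of k P"
    by (auto simp: squash_def unions_of_def)
  ultimately show "bij_betw Union (squash H P k) (H \<inter> unions_of k P)"
    by (simp add: bij_betw_def)
qed

lemma card_unions_of_eq_partitions:
  assumes "P \<in> eq_partitions V q" and "q > 0" and "finite V"
  shows "card (unions_of k P) = card P choose k"
proof -
  have "inj_on Union {I. I \<subseteq> P \<and> card I = k}"
    using inj_on_Union_eq_partitions[OF assms(1,2)] by (rule inj_on_subset) auto
  then have "card (unions_of k P) = card {I. I \<subseteq> P \<and> card I = k}"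
    by (simp add: unions_of_def card_image)
  also have "\<dots> = card P choose k"
    using finite_eq_partitions_member[OF assms(3,1)] by (rule n_subsets)
  finally show ?thesis .
qed

lemma unions_of_eq_partitions_subset:
  assumes "P \<in> eq_partitions V q" and "finite V"
  shows "unions_of k P \<subseteq> {e. e \<subseteq> V \<and> card e = q * k}"
proof
  fix e
  assume "e \<in> unions_of k P"
  then obtain I where I: "I \<subseteq> P" "card I = k" "e = \<Union>I"
    by (auto simp: unions_of_def)
  then have "e \<subseteq> V"
    using assms(1) by (auto simp: eq_partitions_def)
  moreover have "card e = q * k"
    using card_Union_eq_partitions[OF assms I(1)] I by simp
  ultimately show "e \<in> {e. e \<subseteq> V \<and> card e = q * k}"
    by simp
qed

lemma image_mem_unions_of:
  assumes "inj_on \<sigma> (\<Union>P)" and "e \<in> unions_of k P"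
  shows "\<sigma> ` e \<in> unions_of k (image \<sigma> ` P)"
proof -
  obtain I where I: "I \<subseteq> P" "card I = k" "e = \<Union>I"
    using assms(2) by (auto simp: unions_of_def)
  have "I \<subseteq> Pow (\<Union>P)"
    using I(1) by auto
  then have "inj_on (image \<sigma>) I"
    by (rule inj_on_subset[OF inj_on_image_Pow[OF assms(1)]])
  then have "card (image \<sigma> ` I) = k"
    using I(2) by (simp add: card_image)
  moreover have "\<sigma> ` e = \<Union>(image \<sigma> ` I)"
    using I(3) by auto
  moreover have "image \<sigma> ` I \<subseteq> image \<sigma> ` P"
    using I(1) by auto
  ultimately show ?thesis
    by (auto simp: unions_of_def)
qed

lemma card_permutations_of_set_unions_of_le:
  assumes "finite V" and "e \<subseteq> V" and "e' \<subseteq> V" and "card e = card e'"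
  shows "card {xs\<in>permutations_of_set V. e \<in> unions_of k (block_partition q xs)}
           \<le> card {xs\<in>permutations_of_set V. e' \<in> unions_of k (block_partition q xs)}"
proof -
  obtain \<sigma> where \<sigma>: "bij_betw \<sigma> V V" "\<sigma> ` e = e'"
    using ex_bij_betw_image_eq[OF assms] .
  show ?thesis
  proof (rule card_permutations_of_set_le_relabel[OF \<sigma>(1)])
    fix xs
    assume "xs \<in> permutations_of_set V" "e \<in> unions_of k (block_partition q xs)"
    moreover note Union_block_partition_subset[of q xs]
    ultimately have "\<sigma> ` e \<in> unions_of k (image \<sigma> ` block_partition q xs)"
      using \<sigma>(1) by (intro image_mem_unions_of)
        (auto simp: bij_betw_def permutations_of_set_def intro: inj_on_subset)
    then show "e' \<in> unions_of k (block_partition q (map \<sigma> xs))"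
      by (simp add: block_partition_map \<sigma>(2))
  qed
qed

lemma sum_card_Collect_swap:
  assumes "finite A" and "finite B"
  shows "(\<Sum>x\<in>A. card {y\<in>B. R x y}) = (\<Sum>y\<in>B. card {x\<in>A. R x y})"
  using sum.swap_restrict[OF assms, of "\<lambda>_ _. 1::nat" R] by simp

lemma sum_card_incidence_mult_card:
  assumes "finite S" and "finite E" and "H \<subseteq> E"
    and regular: "\<And>e e'. e \<in> E \<Longrightarrow> e' \<in> E \<Longrightarrow> card {x\<in>S. R x e} = card {x\<in>S. R x e'}"
  shows "(\<Sum>x\<in>S. card {e\<in>H. R x e}) * card E = card H * (\<Sum>x\<in>S. card {e\<in>E. R x e})"
proof -
  have "finite H"
    using assms(2,3) by (rule finite_subset[rotated])
  have "card {x\<in>S. R x e} * card E = (\<Sum>e'\<in>E. card {x\<in>S. R x e'})" if "e \<in> H" for e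
  proof -
    have "(\<Sum>e'\<in>E. card {x\<in>S. R x e'}) = (\<Sum>e'\<in>E. card {x\<in>S. R x e})"
      using regular that \<open>H \<subseteq> E\<close> by (intro sum.cong refl) blast
    then show ?thesis
      by simp
  qed
  then have "(\<Sum>e\<in>H. card {x\<in>S. R x e}) * card E = card H * (\<Sum>e\<in>E. card {x\<in>S. R x e})"
    by (simp add: sum_distrib_right)
  then show ?thesis
    using sum_card_Collect_swap[OF \<open>finite S\<close> \<open>finite H\<close>, of R]
      sum_card_Collect_swap[OF \<open>finite S\<close> \<open>finite E\<close>, of R]
    by simp
qed

lemma sum_card_squash_block_partition:
  assumes "finite V" and "card V = q * n" and "q > 0" and H: "\<forall>e\<in>H. e \<subseteq> V \<and> card e = q * k"
  shows "(\<Sum>xs\<in>permutations_of_set V. card (squash H (block_partition q xs) k)) * ((q * n) choose (q * k))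
           = card H * card (permutations_of_set V) * (n choose k)"
proof -
  define S where "S = permutations_of_set V"
  define E where "E = {e. e \<subseteq> V \<and> card e = q * k}"
  note partition = block_partition_permutations_of_set[OF _ assms(2,3)]
  have "card (squash H (block_partition q xs) k) = card {e\<in>H. e \<in> unions_of k (block_partition q xs)}"
    if "xs \<in> S" for xs
    using card_squash_eq_partitions[OF partition(1) \<open>q > 0\<close>] that by (simp add: S_def Int_def)
  moreover have "card {e\<in>E. e \<in> unions_of k (block_partition q xs)} = n choose k" if "xs \<in> S" for xs
  proof -
    have "unions_of k (block_partition q xs) \<subseteq> E"
      using that unfolding E_def S_def by (intro unions_of_eq_partitions_subset partition(1) \<open>finite V\<close>)
    then have "{e\<in>E. e \<in> unions_of k (block_partition q xs)} = unions_of k (block_partition q xs)"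
      by blast
    then show ?thesis
      using that partition card_unions_of_eq_partitions[OF _ \<open>q > 0\<close> \<open>finite V\<close>] by (simp add: S_def)
  qed
  moreover have "(\<Sum>xs\<in>S. card {e\<in>H. e \<in> unions_of k (block_partition q xs)}) * card E
      = card H * (\<Sum>xs\<in>S. card {e\<in>E. e \<in> unions_of k (block_partition q xs)})"
    using \<open>finite V\<close> H card_permutations_of_set_unions_of_le[OF \<open>finite V\<close>]
    by (intro sum_card_incidence_mult_card) (auto simp: S_def E_def intro!: antisym)
  moreover have "card E = (q * n) choose (q * k)"
    using n_subsets[OF \<open>finite V\<close>, of "q * k"] \<open>card V = q * n\<close> by (simp add: E_def)
  ultimately show ?thesis
    by (simp add: S_def mult_ac)
qed

lemma average_card_squash_block_partition:
  assumes "finite V" and "card V = q * n" and "q > 0" and H: "\<forall>e\<in>H. e \<subseteq> V \<and> card e = q * k"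
  shows "average (permutations_of_set V) (\<lambda>xs. card (squash H (block_partition q xs) k))
           = (n choose k) / ((q * n) choose (q * k)) * card H"
proof (cases "(q * n) choose (q * k) = 0")
  case True
  then have "card V < q * k"
    using \<open>card V = q * n\<close> by simp
  moreover have "card e \<le> card V" if "e \<in> H" for e
    using H that \<open>finite V\<close> by (metis card_mono)
  ultimately have "H = {}"
    using H by (metis ex_in_conv leD)
  then show ?thesis
    by (simp add: average_def squash_def)
next
  case False
  have "card (permutations_of_set V) > 0"
    using \<open>finite V\<close> by simp
  moreover have "(\<Sum>xs\<in>permutations_of_set V. real (card (squash H (block_partition q xs) k)))
      * ((q * n) choose (q * k)) = card H * card (permutations_of_set V) * (n choose k)"
    using arg_cong[OF sum_card_squash_block_partition[OF assms], of real] by simp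
  ultimately show ?thesis
    using False \<open>finite V\<close> by (simp add: average_def field_simps)
qed

lemma card_subsets_containing_le:
  assumes "finite P"
  shows "card {I. I \<subseteq> P \<and> card I = k \<and> B \<in> I} \<le> card P ^ (k - 1)"
proof -
  have "card {I. I \<subseteq> P \<and> card I = k \<and> B \<in> I} \<le> card {J. J \<subseteq> P - {B} \<and> card J = k - 1}"
  proof (rule card_inj_on_le[where f = "\<lambda>I. I - {B}"])
    show "inj_on (\<lambda>I. I - {B}) {I. I \<subseteq> P \<and> card I = k \<and> B \<in> I}"
      by (rule inj_onI) (metis (no_types, lifting) insert_Diff mem_Collect_eq)
    show "(\<lambda>I. I - {B}) ` {I. I \<subseteq> P \<and> card I = k \<and> B \<in> I} \<subseteq> {J. J \<subseteq> P - {B} \<and> card J = k - 1}"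
    proof
      fix J
      assume "J \<in> (\<lambda>I. I - {B}) ` {I. I \<subseteq> P \<and> card I = k \<and> B \<in> I}"
      then obtain I where "I \<subseteq> P" "card I = k" "B \<in> I" "J = I - {B}"
        by blast
      moreover have "finite I"
        using \<open>I \<subseteq> P\<close> assms by (rule finite_subset)
      ultimately show "J \<in> {J. J \<subseteq> P - {B} \<and> card J = k - 1}"
        by auto
    qed
    show "finite {J. J \<subseteq> P - {B} \<and> card J = k - 1}"
      using assms by simp
  qed
  also have "\<dots> = card (P - {B}) choose (k - 1)"
    using assms by (intro n_subsets) simp
  also have "\<dots> \<le> card (P - {B}) ^ (k - 1)"
    by (cases "k - 1 \<le> card (P - {B})") (simp_all add: binomial_le_pow binomial_eq_0)
  also have "\<dots> \<le> card P ^ (k - 1)"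
    by (intro power_mono card_Diff1_le) simp
  finally show ?thesis .
qed

lemma card_squash_le_subset:
  assumes "finite P" and "P0 \<subseteq> P"
  shows "card (squash H P k) \<le> card (squash H P0 k) + card (P - P0) * card P ^ (k - 1)"
proof -
  define A where "A B = {I. I \<subseteq> P \<and> card I = k \<and> B \<in> I}" for B
  have "squash H P k \<subseteq> squash H P0 k \<union> (\<Union>B\<in>P - P0. A B)"
    by (auto simp: squash_def A_def)
  moreover have "finite (squash H P0 k)"
    using assms by (meson finite_squash finite_subset)
  moreover have "finite (\<Union>B\<in>P - P0. A B)"
    using assms finite_subset[of "\<Union>B\<in>P - P0. A B" "Pow P"] by (auto simp: A_def)
  ultimately have "card (squash H P k) \<le> card (squash H P0 k) + card (\<Union>B\<in>P - P0. A B)"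
    by (meson card_Un_le card_mono finite_UnI order_trans)
  also have "card (\<Union>B\<in>P - P0. A B) \<le> (\<Sum>B\<in>P - P0. card (A B))"
    using assms by (intro card_UN_le) simp
  also have "\<dots> \<le> (\<Sum>B\<in>P - P0. card P ^ (k - 1))"
    unfolding A_def using assms by (intro sum_mono card_subsets_containing_le)
  finally show ?thesis
    by simp
qed

(* Only the at most two blocks containing a or b are moved, and each block lies in at most
   card P ^ (k - 1) sets of k blocks. *)
lemma card_squash_transpose_le:
  assumes "P \<in> eq_partitions V q" and "finite V"
  shows "card (squash H P k) \<le> card (squash H (image (Transposition.transpose a b) ` P) k) + 2 * card P ^ (k - 1)"
proof -
  define P0 where "P0 = {B\<in>P. a \<notin> B \<and> b \<notin> B}"
  have "finite P"
    using finite_eq_partitions_member[OF assms(2,1)] .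
  have "P0 \<subseteq> image (Transposition.transpose a b) ` P"
  proof
    fix B
    assume "B \<in> P0"
    then have "B \<in> P" "Transposition.transpose a b ` B = B"
      by (auto simp: P0_def)
    then show "B \<in> image (Transposition.transpose a b) ` P"
      by (metis rev_image_eqI)
  qed
  then have "squash H P0 k \<subseteq> squash H (image (Transposition.transpose a b) ` P) k"
    by (auto simp: squash_def)
  moreover have "finite (squash H (image (Transposition.transpose a b) ` P) k)"
    using \<open>finite P\<close> by (simp add: finite_squash)
  ultimately have "card (squash H P0 k) \<le> card (squash H (image (Transposition.transpose a b) ` P) k)"
    by (rule card_mono[rotated])
  have "card (P - P0) \<le> card ({B\<in>P. a \<in> B} \<union> {B\<in>P. b \<in> B})"
    using \<open>finite P\<close> by (intro card_mono) (auto simp: P0_def)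
  also have "\<dots> \<le> card {B\<in>P. a \<in> B} + card {B\<in>P. b \<in> B}"
    by (rule card_Un_le)
  also have "\<dots> \<le> 2"
    using card_eq_partitions_containing_le[OF assms, of a] card_eq_partitions_containing_le[OF assms, of b]
    by simp
  finally have "card (P - P0) * card P ^ (k - 1) \<le> 2 * card P ^ (k - 1)"
    by (rule mult_right_mono) simp
  moreover have "card (squash H P k) \<le> card (squash H P0 k) + card (P - P0) * card P ^ (k - 1)"
    using \<open>finite P\<close> by (rule card_squash_le_subset) (simp add: P0_def)
  ultimately show ?thesis
    using \<open>card (squash H P0 k) \<le> _\<close> by linarith
qed

lemma abs_card_squash_transpose_le:
  assumes "distinct xs" and "length xs = q * n" and "q > 0"
  shows "\<bar>real (card (squash H (block_partition q xs) k))
            - real (card (squash H (block_partition q (map (Transposition.transpose a b) xs)) k))\<bar> \<le> 2 * real n ^ (k - 1)"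
proof -
  have bound: "card (squash H (block_partition q ys) k)
      \<le> card (squash H (block_partition q (map (Transposition.transpose a b) ys)) k) + 2 * n ^ (k - 1)"
    if "distinct ys" "length ys = q * n" for ys
    using card_squash_transpose_le[OF block_partition_in_eq_partitions[OF that(1) _ \<open>q > 0\<close>], of H k a b]
      card_block_partition[OF that \<open>q > 0\<close>] that(2)
    by (simp add: block_partition_map)
  have "map (Transposition.transpose a b) (map (Transposition.transpose a b) xs) = xs"
    by (simp add: map_idI)
  then have bound_back: "card (squash H (block_partition q (map (Transposition.transpose a b) xs)) k)
      \<le> card (squash H (block_partition q xs) k) + 2 * n ^ (k - 1)"
    using bound[of "map (Transposition.transpose a b) xs"] assms(1,2) by (simp add: distinct_map)
  show ?thesis
    using of_nat_mono[OF bound[OF assms(1,2)], where 'a = real] of_nat_mono[OF bound_back, where 'a = real]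
    by (simp add: abs_le_iff)
qed

lemma card_permutations_of_set_squash_lower_tail:
  assumes "finite V" and "card V = q * n" and "q > 0" and "n > 0" and "k \<ge> 1" and "eps \<ge> 0"
    and H: "\<forall>e\<in>H. e \<subseteq> V \<and> card e = q * k"
  shows "card {xs\<in>permutations_of_set V. real (card (squash H (block_partition q xs) k))
             < real (n choose k) / real ((q * n) choose (q * k)) * real (card H) - eps * real n ^ k}
           \<le> card (permutations_of_set V) * exp (- (eps\<^sup>2 * real n / (2 * real q)))"
proof -
  define S where "S = permutations_of_set V"
  define g where "g xs = real (card (squash H (block_partition q xs) k))" for xs
  define thr where "thr = real (n choose k) / real ((q * n) choose (q * k)) * real (card H) - eps * real n ^ k"
  have length: "length xs = q * n" if "xs \<in> S" for xs
    using that \<open>card V = q * n\<close> by (simp add: S_def length_finite_permutations_of_set)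
  have "\<bar>average (extending S (p @ [a])) g - average (extending S (p @ [b])) g\<bar> \<le> 2 * real n ^ (k - 1)"
    if "extending S (p @ [a]) \<noteq> {}" "extending S (p @ [b]) \<noteq> {}" for p a b
    using that length \<open>q > 0\<close> unfolding S_def g_def
    by (intro abs_average_extending_permutations_of_set_le abs_card_squash_transpose_le)
      (auto simp: S_def permutations_of_set_def)
  then have "card {xs\<in>S. g xs \<le> average S g - eps * real n ^ k}
      \<le> card S * exp (- 2 * (eps * real n ^ k)\<^sup>2 / (real (q * n) * (2 * real n ^ (k - 1))\<^sup>2))"
    using \<open>finite V\<close> length \<open>eps \<ge> 0\<close> by (intro card_lower_deviation_le) (auto simp: S_def)
  moreover have "real n ^ k = n * n ^ (k - 1)"
    using \<open>k \<ge> 1\<close> by (simp flip: power_Suc)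
  then have "2 * (eps * real n ^ k)\<^sup>2 / (real (q * n) * (2 * real n ^ (k - 1))\<^sup>2) = eps\<^sup>2 * n / (2 * q)"
    using \<open>n > 0\<close> by (simp add: field_simps power2_eq_square)
  moreover have "average S g - eps * real n ^ k = thr"
    unfolding S_def g_def thr_def using assms by (subst average_card_squash_block_partition) auto
  ultimately have "card {xs\<in>S. g xs \<le> thr} \<le> card S * exp (- (eps\<^sup>2 * real n / (2 * real q)))"
    by simp
  moreover have "card {xs\<in>S. g xs < thr} \<le> card {xs\<in>S. g xs \<le> thr}"
    by (intro card_mono) (auto simp: S_def)
  ultimately show ?thesis
    unfolding S_def g_def thr_def by (meson of_nat_le_iff order_trans)
qed

theorem lemma6p1:
  fixes V :: "'a set" and H :: "'a set set" and k n q :: nat and eps :: real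
  assumes "k \<ge> 1" and "n \<ge> 1" and "q \<ge> 2" and "eps > 0"
    and "finite V" and "card V = q * n"
    and "\<forall>e\<in>H. e \<subseteq> V \<and> card e = q * k"
  shows "real (card {P \<in> eq_partitions V q.
             real (card (squash H P k)) \<ge>
               real (n choose k) / real ((q * n) choose (q * k)) * real (card H) - eps * real n ^ k})
           / real (card (eq_partitions V q))
         \<ge> 1 - 2 * exp (- (eps\<^sup>2 * real n / (16 * real q)))"
proof -
  have "q > 0"
    using \<open>q \<ge> 2\<close> by simp
  let ?S = "permutations_of_set V"
  let ?thr = "real (n choose k) / real ((q * n) choose (q * k)) * real (card H) - eps * real n ^ k"
  have "real (card {xs\<in>?S. \<not> ?thr \<le> real (card (squash H (block_partition q xs) k))})
      \<le> card ?S * exp (- (eps\<^sup>2 * n / (2 * real q)))"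
    using card_permutations_of_set_squash_lower_tail[of V q n k eps H] assms \<open>q > 0\<close>
    by (simp add: not_le)
  then have "real (card {xs\<in>?S. ?thr \<le> real (card (squash H (block_partition q xs) k))}) / card ?S
      \<ge> 1 - exp (- (eps\<^sup>2 * n / (2 * real q)))"
    using \<open>finite V\<close> by (intro ratio_card_filter_ge) simp_all
  moreover have "exp (- (eps\<^sup>2 * n / (2 * real q))) \<le> exp (- (eps\<^sup>2 * n / (16 * real q)))"
    using \<open>q > 0\<close> by (simp add: frac_le)
  ultimately show ?thesis
    using card_eq_partitions_filter_ratio[OF \<open>finite V\<close> \<open>card V = q * n\<close> \<open>q > 0\<close>,
        of "\<lambda>P. ?thr \<le> real (card (squash H P k))"]
      exp_gt_zero[of "- (eps\<^sup>2 * n / (16 * real q))"]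
    by linarith
qed

end
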